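(* Every ideal of $\mathcal{A}$ is finitely generated.
   Context: Let $\mathbf{k}$ be a commutative noetherian ring, $r$ a positive integer, and $\mathcal{A}=\bigoplus_{n,d\ge0}(\mathrm{Sym}^d\mathbf{k}^r)^{\otimes n}$, bigraded by $(d,n)$. For a split $\sigma$ of $[n+m]$ (a subset $\{i_1<\cdots<i_n\}$ and its complement $\{j_1<\cdots<j_m\}$), the shuffle product $\cdot_\sigma:(\mathrm{Sym}^d\mathbf{k}^r)^{\otimes n}\otimes(\mathrm{Sym}^d\mathbf{k}^r)^{\otimes m}\to(\mathrm{Sym}^d\mathbf{k}^r)^{\otimes(n+m)}$ puts the factors of the first argument in positions $i_1,\dots,i_n$ and those of the second in positions $j_1,\dots,j_m$. The product $*:(\mathrm{Sym}^d\mathbf{k}^r)^{\otimes n}\otimes(\mathrm{Sym}^e\mathbf{k}^r)^{\otimes n}\to(\mathrm{Sym}^{d+e}\mathbf{k}^r)^{\otimes n}$ is factorwise multiplication. All other products are $0$. An ideal of $\mathcal{A}$ is a bihomogeneous subspace $I$ such that $g*f\in I$ and $g\cdot_\sigma f\in I$ for all $f\in I$, $g\in\mathcal{A}$ and all splits $\sigma$; it is finitely generated if it is the smallest ideal containing some finite subset. *)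

theory Defs
  imports Main
begin

definition ring_ideal :: "'k::comm_ring_1 set \<Rightarrow> bool" where
  "ring_ideal J \<longleftrightarrow> 0 \<in> J \<and> (\<forall>a\<in>J. \<forall>b\<in>J. a + b \<in> J) \<and> (\<forall>c. \<forall>a\<in>J. c * a \<in> J)"

definition ring_ideal_fg :: "'k::comm_ring_1 set \<Rightarrow> bool" where
  "ring_ideal_fg J \<longleftrightarrow> (\<exists>F. finite F \<and> F \<subseteq> J \<and>
      J = {\<Sum>a\<in>F. c a * a | c. True})"

definition noetherian :: "'k::comm_ring_1 itself \<Rightarrow> bool" where
  "noetherian _ \<longleftrightarrow> (\<forall>J::'k set. ring_ideal J \<longrightarrow> ring_ideal_fg J)"

text \<open>(Sym^d k^r)^{\<otimes>n} is the free k-module on n-tuples of monomials of degree d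
  in r variables.  A basis element of A is a pair (d, ms) where ms is a list of
  length n of exponent vectors (lists of length r) each summing to d.\<close>

type_synonym basis = "nat \<times> nat list list"

definition valid_basis :: "nat \<Rightarrow> basis \<Rightarrow> bool" where
  "valid_basis r b \<longleftrightarrow> (\<forall>m\<in>set (snd b). length m = r \<and> sum_list m = fst b)"

definition Aelem :: "nat \<Rightarrow> (basis \<Rightarrow> 'k::comm_ring_1) \<Rightarrow> bool" where
  "Aelem r f \<longleftrightarrow> finite {b. f b \<noteq> 0} \<and> (\<forall>b. f b \<noteq> 0 \<longrightarrow> valid_basis r b)"

definition comp :: "nat \<Rightarrow> nat \<Rightarrow> (basis \<Rightarrow> 'k::comm_ring_1) \<Rightarrow> basis \<Rightarrow> 'k" where
  "comp d n f = (\<lambda>b. if fst b = d \<and> length (snd b) = n then f b else 0)"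

text \<open>bilinear extension of a partial operation on basis elements\<close>
definition conv :: "(basis \<Rightarrow> basis \<Rightarrow> basis option) \<Rightarrow> (basis \<Rightarrow> 'k::comm_ring_1)
    \<Rightarrow> (basis \<Rightarrow> 'k) \<Rightarrow> basis \<Rightarrow> 'k" where
  "conv op g f = (\<lambda>b. \<Sum>p\<in>{(b1, b2). g b1 \<noteq> 0 \<and> f b2 \<noteq> 0 \<and> op b1 b2 = Some b}.
       g (fst p) * f (snd p))"

text \<open>Shuffle of lists along a split: S is the set of (0-based) positions of the
  first list, its complement in {0..<n+m} the positions of the second.\<close>
definition shuffle_lists :: "nat set \<Rightarrow> 'a list \<Rightarrow> 'a list \<Rightarrow> 'a list" where
  "shuffle_lists S xs ys = map (\<lambda>i. if i \<in> S then xs ! card {j\<in>S. j < i}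
       else ys ! card {j. j < i \<and> j \<notin> S}) [0..<length xs + length ys]"

definition is_split :: "nat set \<Rightarrow> nat \<Rightarrow> nat \<Rightarrow> bool" where
  "is_split S n m \<longleftrightarrow> S \<subseteq> {0..<n + m} \<and> card S = n"

text \<open>shuffle product \<cdot>_S on basis elements (zero unless both have the same d
  and S is a split of [n+m])\<close>
definition sh_op :: "nat set \<Rightarrow> basis \<Rightarrow> basis \<Rightarrow> basis option" where
  "sh_op S b1 b2 = (if fst b1 = fst b2 \<and> is_split S (length (snd b1)) (length (snd b2))
       then Some (fst b1, shuffle_lists S (snd b1) (snd b2)) else None)"

definition st_op :: "basis \<Rightarrow> basis \<Rightarrow> basis option" where
  "st_op b1 b2 = (if length (snd b1) = length (snd b2)
       then Some (fst b1 + fst b2, map2 (map2 (+)) (snd b1) (snd b2)) else None)"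

definition A_ideal :: "nat \<Rightarrow> ((basis \<Rightarrow> 'k::comm_ring_1) set) \<Rightarrow> bool" where
  "A_ideal r I \<longleftrightarrow>
     I \<subseteq> {f. Aelem r f} \<and> (\<lambda>_. 0) \<in> I \<and>
     (\<forall>f\<in>I. \<forall>g\<in>I. (\<lambda>b. f b + g b) \<in> I) \<and>
     (\<forall>c. \<forall>f\<in>I. (\<lambda>b. c * f b) \<in> I) \<and>
     (\<forall>f\<in>I. \<forall>d n. comp d n f \<in> I) \<and>
     (\<forall>g f. Aelem r g \<longrightarrow> f \<in> I \<longrightarrow>
        conv st_op g f \<in> I \<and> (\<forall>S. conv (sh_op S) g f \<in> I))"

definition A_ideal_gen :: "nat \<Rightarrow> (basis \<Rightarrow> 'k::comm_ring_1) set \<Rightarrow> (basis \<Rightarrow> 'k) set" where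
  "A_ideal_gen r F = \<Inter>{I. A_ideal r I \<and> F \<subseteq> I}"

definition A_ideal_fg :: "nat \<Rightarrow> (basis \<Rightarrow> 'k::comm_ring_1) set \<Rightarrow> bool" where
  "A_ideal_fg r I \<longleftrightarrow> (\<exists>F. finite F \<and> F \<subseteq> {f. Aelem r f} \<and> I = A_ideal_gen r F)"

end

theory Submission
  imports Defs "HOL-Library.Ramsey" "HOL-Library.Infinite_Set" "HOL-Library.Sublist"
    "HOL-Library.List_Lexorder" "HOL-Library.Product_Lexorder"
begin

text \<open>Order basis elements lexicographically.  On a fixed bidegree both products with a basis
  element are strictly monotone, so multiplying by a basis element carries a leading term \<open>b\<close> to
  any basis element that \<open>b\<close> divides, keeping the leading coefficient.  By Dickson's and
  Higman's lemmas divisibility is almost full on basis elements.  Together with the noetherianity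
  of \<open>k\<close> this gives finitely many elements of the ideal whose leading coefficients, transported
  along divisibility, span the leading coefficients of all its elements.  Cancelling leading terms
  then shows that these finitely many elements generate every bihomogeneous component.\<close>

section \<open>Almost-full relations\<close>

definition almost_full_on :: "('a \<Rightarrow> 'a \<Rightarrow> bool) \<Rightarrow> 'a set \<Rightarrow> bool" where
  "almost_full_on P A \<longleftrightarrow> (\<forall>g :: nat \<Rightarrow> 'a. (\<forall>i. g i \<in> A) \<longrightarrow> (\<exists>i j. i < j \<and> P (g i) (g j)))"

lemma almost_full_onI:
  "(\<And>g :: nat \<Rightarrow> 'a. \<forall>i. g i \<in> A \<Longrightarrow> \<exists>i j. i < j \<and> P (g i) (g j)) \<Longrightarrow> almost_full_on P A"
  unfolding almost_full_on_def by blast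

lemma almost_full_onD:
  fixes g :: "nat \<Rightarrow> 'a"
  shows "almost_full_on P A \<Longrightarrow> \<forall>i. g i \<in> A \<Longrightarrow> \<exists>i j. i < j \<and> P (g i) (g j)"
  unfolding almost_full_on_def by blast

lemma almost_full_on_subseq:
  fixes g :: "nat \<Rightarrow> 'a"
  assumes af: "almost_full_on P A" and g: "\<forall>i. g i \<in> A"
  obtains \<phi> :: "nat \<Rightarrow> nat" where "strict_mono \<phi>" "\<And>i j. i < j \<Longrightarrow> P (g (\<phi> i)) (g (\<phi> j))"
proof -
  define colour where "colour X = (if P (g (Min X)) (g (Max X)) then 0 else 1::nat)" for X
  have colour_pair: "colour {i, j} = (if P (g i) (g j) then 0 else 1)" if "i < j" for i j
    using that by (simp add: colour_def)
  have "\<forall>x\<in>UNIV. \<forall>y\<in>UNIV. x \<noteq> y \<longrightarrow> colour {x, y} < 2" by (simp add: colour_def)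
  from Ramsey2[OF infinite_UNIV_nat this] obtain Y t where
    Y: "infinite Y" "t < 2" and homogeneous: "\<forall>i\<in>Y. \<forall>j\<in>Y. i \<noteq> j \<longrightarrow> colour {i, j} = t"
    by blast
  define \<phi> where "\<phi> = enumerate Y"
  have \<phi>: "strict_mono \<phi>" "\<phi> i \<in> Y" for i
    unfolding \<phi>_def using Y(1) by (simp_all add: strict_mono_enumerate enumerate_in_set)
  have colour_\<phi>: "colour {\<phi> i, \<phi> j} = t" if "i < j" for i j
    using homogeneous \<phi>(2) strict_monoD[OF \<phi>(1) that] by (metis less_irrefl)
  have P_iff: "P (g (\<phi> i)) (g (\<phi> j)) \<longleftrightarrow> t = 0" if "i < j" for i j
    using colour_\<phi>[OF that] colour_pair[OF strict_monoD[OF \<phi>(1) that]] by (auto split: if_splits)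
  obtain i j where "i < j" "P (g (\<phi> i)) (g (\<phi> j))"
    using almost_full_onD[OF af, of "g \<circ> \<phi>"] g by auto
  then show thesis
    using that[OF \<phi>(1)] P_iff by blast
qed

lemma almost_full_on_map:
  assumes "almost_full_on P A" "h ` B \<subseteq> A"
    and "\<And>x y. x \<in> B \<Longrightarrow> y \<in> B \<Longrightarrow> P (h x) (h y) \<Longrightarrow> Q x y"
  shows "almost_full_on Q B"
proof (rule almost_full_onI)
  fix g :: "nat \<Rightarrow> 'b" assume g: "\<forall>i. g i \<in> B"
  then have "\<forall>i. (h \<circ> g) i \<in> A" using assms(2) by auto
  then have "\<exists>i j. i < j \<and> P ((h \<circ> g) i) ((h \<circ> g) j)"
    by (rule almost_full_onD[OF assms(1)])
  then obtain i j where "i < j" "P (h (g i)) (h (g j))" by auto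
  then show "\<exists>i j. i < j \<and> Q (g i) (g j)"
    using assms(3)[OF g[rule_format] g[rule_format]] by blast
qed

lemma almost_full_on_Times:
  assumes "almost_full_on P A" "almost_full_on Q B"
  shows "almost_full_on (\<lambda>x y. P (fst x) (fst y) \<and> Q (snd x) (snd y)) (A \<times> B)"
proof (rule almost_full_onI)
  fix g :: "nat \<Rightarrow> 'a \<times> 'b" assume g: "\<forall>i. g i \<in> A \<times> B"
  then have "\<forall>i. fst (g i) \<in> A" "\<forall>i. snd (g i) \<in> B" by (auto simp: mem_Times_iff)
  obtain \<phi> :: "nat \<Rightarrow> nat" where \<phi>: "strict_mono \<phi>" "\<And>i j. i < j \<Longrightarrow> P (fst (g (\<phi> i))) (fst (g (\<phi> j)))"
    using almost_full_on_subseq[OF assms(1) \<open>\<forall>i. fst (g i) \<in> A\<close>] by blast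
  have "\<exists>i j. i < j \<and> Q (snd (g (\<phi> i))) (snd (g (\<phi> j)))"
    by (rule almost_full_onD[OF assms(2)]) (simp add: \<open>\<forall>i. snd (g i) \<in> B\<close>)
  then obtain i j where "i < j" "Q (snd (g (\<phi> i))) (snd (g (\<phi> j)))" by blast
  with \<phi> show "\<exists>i j. i < j \<and> P (fst (g i)) (fst (g j)) \<and> Q (snd (g i)) (snd (g j))"
    by (blast dest: strict_monoD)
qed

lemma almost_full_on_nat_le: "almost_full_on (\<le>) (UNIV :: nat set)"
proof (rule almost_full_onI)
  fix g :: "nat \<Rightarrow> nat"
  obtain i where "\<forall>j. g i \<le> g j"
    using ex_has_least_nat[of "\<lambda>_. True" g] by blast
  then show "\<exists>i j. i < j \<and> g i \<le> g j" by (intro exI[of _ i] exI[of _ "Suc i"]) auto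
qed

lemma almost_full_on_list_all2:
  assumes "almost_full_on P A"
  shows "almost_full_on (list_all2 P) {xs \<in> lists A. length xs = n}"
proof (induction n)
  case 0
  show ?case
  proof (rule almost_full_onI)
    fix g :: "nat \<Rightarrow> 'a list" assume "\<forall>i. g i \<in> {xs \<in> lists A. length xs = 0}"
    then have "g 0 = []" "g 1 = []" by auto
    then show "\<exists>i j. i < j \<and> list_all2 P (g i) (g j)" by (intro exI[of _ 0] exI[of _ 1]) simp
  qed
next
  case (Suc n)
  have "almost_full_on (\<lambda>x y. P (fst x) (fst y) \<and> list_all2 P (snd x) (snd y))
      (A \<times> {xs \<in> lists A. length xs = n})"
    using almost_full_on_Times[OF assms Suc.IH] .
  then show ?case
  proof (rule almost_full_on_map[where h = "\<lambda>xs. (hd xs, tl xs)"])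
    show "(\<lambda>xs. (hd xs, tl xs)) ` {xs \<in> lists A. length xs = Suc n} \<subseteq> A \<times> {xs \<in> lists A. length xs = n}"
      by (auto simp: length_Suc_conv)
  next
    fix xs ys assume "xs \<in> {xs \<in> lists A. length xs = Suc n}" "ys \<in> {xs \<in> lists A. length xs = Suc n}"
      and "P (fst (hd xs, tl xs)) (fst (hd ys, tl ys)) \<and> list_all2 P (snd (hd xs, tl xs)) (snd (hd ys, tl ys))"
    then show "list_all2 P xs ys" by (auto simp: length_Suc_conv)
  qed
qed

section \<open>Higman's lemma\<close>

fun prefix_seq :: "('a list \<Rightarrow> 'a) \<Rightarrow> nat \<Rightarrow> 'a list" where
  "prefix_seq c 0 = []"
| "prefix_seq c (Suc n) = prefix_seq c n @ [c (prefix_seq c n)]"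

lemma prefix_seq_eq_map: "prefix_seq c n = map (\<lambda>i. c (prefix_seq c i)) [0..<n]"
  by (induction n) simp_all

lemma dependent_choice_prefixes:
  assumes "P []" and step: "\<And>xs. P xs \<Longrightarrow> \<exists>x. P (xs @ [x]) \<and> Q xs x"
  obtains f :: "nat \<Rightarrow> 'a" where "\<And>n. P (map f [0..<n])" "\<And>n. Q (map f [0..<n]) (f n)"
proof -
  define c where "c xs = (SOME x. P (xs @ [x]) \<and> Q xs x)" for xs
  define f where "f i = c (prefix_seq c i)" for i
  have prefix: "prefix_seq c n = map f [0..<n]" for n
    unfolding f_def by (rule prefix_seq_eq_map)
  have choice: "P (xs @ [c xs]) \<and> Q xs (c xs)" if "P xs" for xs
    unfolding c_def using someI_ex[OF step[OF that]] .
  have P: "P (prefix_seq c n)" for n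
    by (induction n) (simp_all add: assms(1) choice)
  show thesis
  proof
    show "P (map f [0..<n])" for n using P prefix by metis
    show "Q (map f [0..<n]) (f n)" for n
      using choice[OF P[of n]] prefix f_def by metis
  qed
qed

definition bad_seq :: "('a \<Rightarrow> 'a \<Rightarrow> bool) \<Rightarrow> 'a set \<Rightarrow> (nat \<Rightarrow> 'a list) \<Rightarrow> bool" where
  "bad_seq P A f \<longleftrightarrow> (\<forall>i. f i \<in> lists A) \<and> (\<forall>i j. i < j \<longrightarrow> \<not> list_emb P (f i) (f j))"

lemma minimal_bad_seq:
  assumes "bad_seq P A g"
  obtains m where "bad_seq P A m"
    and "\<And>n g. bad_seq P A g \<Longrightarrow> (\<forall>i<n. g i = m i) \<Longrightarrow> length (m n) \<le> length (g n)"
proof -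
  define extends where "extends xs g \<longleftrightarrow> bad_seq P A g \<and> (\<forall>i<length xs. g i = xs ! i)"
    for xs :: "'a list list" and g
  define extendable where "extendable xs \<longleftrightarrow> (\<exists>g. extends xs g)" for xs
  define shortest where
    "shortest xs x \<longleftrightarrow> (\<forall>g. extends xs g \<longrightarrow> length x \<le> length (g (length xs)))"
    for xs and x :: "'a list"
  have step: "\<exists>x. extendable (xs @ [x]) \<and> shortest xs x" if ext: "extendable xs" for xs
  proof -
    define l where "l = (LEAST l. \<exists>g. extends xs g \<and> length (g (length xs)) = l)"
    obtain g where g: "extends xs g" "length (g (length xs)) = l"
      using ext LeastI_ex[of "\<lambda>l. \<exists>g. extends xs g \<and> length (g (length xs)) = l"]
      unfolding extendable_def l_def by blast
    have "extends (xs @ [g (length xs)]) g"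
      using g(1) by (auto simp: extends_def nth_append less_Suc_eq)
    moreover have "shortest xs (g (length xs))"
      unfolding shortest_def
    proof (intro allI impI)
      fix g' assume "extends xs g'"
      then have "l \<le> length (g' (length xs))"
        unfolding l_def by (intro Least_le) blast
      then show "length (g (length xs)) \<le> length (g' (length xs))" using g(2) by simp
    qed
    ultimately show ?thesis unfolding extendable_def by blast
  qed
  have "extendable []" using assms unfolding extendable_def extends_def by auto
  then obtain m :: "nat \<Rightarrow> 'a list" where
    m: "\<And>n. extendable (map m [0..<n])" "\<And>n. shortest (map m [0..<n]) (m n)"
    using dependent_choice_prefixes[of extendable shortest] step by blast
  have agree: "extends (map m [0..<n]) g \<longleftrightarrow> bad_seq P A g \<and> (\<forall>i<n. g i = m i)" for n g
    unfolding extends_def by auto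
  show thesis
  proof
    show "bad_seq P A m" unfolding bad_seq_def
    proof (intro conjI allI impI)
      fix i
      obtain g where "bad_seq P A g" "\<forall>k<Suc i. g k = m k"
        using m(1)[of "Suc i"] unfolding extendable_def agree by blast
      then show "m i \<in> lists A" unfolding bad_seq_def by (metis lessI)
    next
      fix i j :: nat assume "i < j"
      obtain g where "bad_seq P A g" "\<forall>k<Suc j. g k = m k"
        using m(1)[of "Suc j"] unfolding extendable_def agree by blast
      with \<open>i < j\<close> show "\<not> list_emb P (m i) (m j)"
        unfolding bad_seq_def by (metis less_SucI lessI)
    qed
    show "length (m n) \<le> length (g n)" if "bad_seq P A g" "\<forall>i<n. g i = m i" for n g
      using m(2)[of n] that unfolding shortest_def agree by simp
  qed
qed

lemma list_emb_tl: "list_emb P xs (tl ys) \<Longrightarrow> list_emb P xs ys"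
  by (cases ys) auto

text \<open>Nash-Williams' minimal bad sequence argument.\<close>
theorem almost_full_on_lists:
  assumes af: "almost_full_on P A"
  shows "almost_full_on (list_emb P) (lists A)"
proof (rule ccontr)
  assume "\<not> ?thesis"
  then obtain g0 where "bad_seq P A g0" unfolding almost_full_on_def bad_seq_def by blast
  then obtain m where bad: "bad_seq P A m"
    and min: "\<And>n g. bad_seq P A g \<Longrightarrow> \<forall>i<n. g i = m i \<Longrightarrow> length (m n) \<le> length (g n)"
    using minimal_bad_seq by blast
  have m_lists: "m i \<in> lists A" for i using bad unfolding bad_seq_def by blast
  have nonempty: "m i \<noteq> []" for i
    using bad unfolding bad_seq_def by (metis lessI list_emb_Nil)
  have "\<forall>i. hd (m i) \<in> A" using m_lists nonempty by (auto simp: lists_eq_set dest: hd_in_set)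
  then obtain \<phi> :: "nat \<Rightarrow> nat" where \<phi>: "strict_mono \<phi>"
    and heads: "\<And>i j. i < j \<Longrightarrow> P (hd (m (\<phi> i))) (hd (m (\<phi> j)))"
    using almost_full_on_subseq[OF af, of "\<lambda>i. hd (m i)"] by blast
  define k where "k = \<phi> 0"
  define \<psi> where "\<psi> i = (if i < k then i else \<phi> (i - k))" for i
  define g where "g i = (if i < k then m i else tl (m (\<psi> i)))" for i
  have \<psi>_mono: "\<psi> i < \<psi> j" if "i < j" for i j
  proof (cases "j < k")
    case False
    have "k \<le> \<phi> (j - k)" unfolding k_def using \<phi> by (simp add: strict_mono_less_eq)
    with that False show ?thesis unfolding \<psi>_def using strict_monoD[OF \<phi>] by auto
  qed (use that in \<open>simp add: \<psi>_def\<close>)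
  have "g i \<in> lists A" for i
    using m_lists nonempty by (auto simp: g_def lists_eq_set dest: list.set_sel(2))
  moreover have "\<not> bad_seq P A g"
  proof
    assume "bad_seq P A g"
    then have "length (m k) \<le> length (g k)" by (rule min) (simp add: g_def)
    moreover have "g k = tl (m k)" by (simp add: g_def \<psi>_def k_def)
    ultimately show False using nonempty[of k] by (cases "m k") auto
  qed
  ultimately obtain i j where "i < j" and emb: "list_emb P (g i) (g j)"
    unfolding bad_seq_def by blast
  have "list_emb P (m (\<psi> i)) (m (\<psi> j))"
  proof (cases "i < k")
    case True
    then show ?thesis
      using emb by (auto simp: g_def \<psi>_def split: if_splits intro: list_emb_tl)
  next
    case False
    then have "P (hd (m (\<psi> i))) (hd (m (\<psi> j)))"
      using heads \<open>i < j\<close> by (simp add: \<psi>_def)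
    moreover have "list_emb P (tl (m (\<psi> i))) (tl (m (\<psi> j)))"
      using emb False \<open>i < j\<close> by (simp add: g_def)
    ultimately show ?thesis
      by (metis list.collapse list_emb_Cons2 nonempty)
  qed
  with bad \<psi>_mono[OF \<open>i < j\<close>] show False unfolding bad_seq_def by blast
qed

section \<open>Divisibility of basis elements\<close>

definition insert_at :: "nat \<Rightarrow> 'a \<Rightarrow> 'a list \<Rightarrow> 'a list" where
  "insert_at k x xs = take k xs @ x # drop k xs"

lemma insert_at_length_append: "insert_at (length xs) y (xs @ ys) = xs @ y # ys"
  by (simp add: insert_at_def)

lemma length_insert_at [simp]: "k \<le> length xs \<Longrightarrow> length (insert_at k x xs) = Suc (length xs)"
  by (simp add: insert_at_def)

text \<open>The two kinds of steps mirror the two products of the algebra: shuffling in a single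
  monomial of the same degree, and factorwise multiplication by a basis element.\<close>
definition basis_dvd_step :: "nat \<Rightarrow> basis \<Rightarrow> basis \<Rightarrow> bool" where
  "basis_dvd_step r b b' \<longleftrightarrow> valid_basis r b \<and>
     ((\<exists>k u. k \<le> length (snd b) \<and> length u = r \<and> sum_list u = fst b \<and>
         b' = (fst b, insert_at k u (snd b))) \<or>
      (\<exists>c. valid_basis r c \<and> length (snd c) = length (snd b) \<and>
         b' = (fst c + fst b, map2 (map2 (+)) (snd c) (snd b))))"

definition basis_dvd :: "nat \<Rightarrow> basis \<Rightarrow> basis \<Rightarrow> bool" where
  "basis_dvd r = (basis_dvd_step r)\<^sup>*\<^sup>*"

text \<open>The fixed prefix \<open>ps\<close> lets the induction keep matched factors in place, so that only
  insertions are needed.\<close>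
lemma basis_dvd_subseq:
  assumes "subseq ws vs" "valid_basis r (d, ps @ vs)"
  shows "basis_dvd r (d, ps @ ws) (d, ps @ vs)"
  using assms
proof (induction vs arbitrary: ps ws rule: list.induct)
  case Nil
  then show ?case by (auto simp: basis_dvd_def dest: list_emb_Nil2)
next
  case (Cons v vs)
  have valid: "valid_basis r (d, ps @ vs)" "length v = r" "sum_list v = d"
    using Cons.prems(2) by (auto simp: valid_basis_def)
  have skip: "basis_dvd r (d, ps @ ws) (d, ps @ v # vs)" if "subseq ws vs"
  proof -
    have "basis_dvd_step r (d, ps @ vs) (d, ps @ v # vs)"
      unfolding basis_dvd_step_def using valid insert_at_length_append[of ps v vs]
      by (intro conjI disjI1 exI[of _ "length ps"] exI[of _ v]) simp_all
    with Cons.IH[OF that valid(1)] show ?thesis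
      unfolding basis_dvd_def by (rule rtranclp.rtrancl_into_rtrancl)
  qed
  show ?case
  proof (cases ws)
    case Nil
    then show ?thesis using skip by simp
  next
    case (Cons w ws')
    show ?thesis
    proof (cases "w = v")
      case True
      then have "subseq ws' vs" using Cons.prems(1) \<open>ws = w # ws'\<close> by simp
      then show ?thesis
        using Cons.IH[of ws' "ps @ [v]"] Cons.prems(2) \<open>ws = w # ws'\<close> True by simp
    next
      case False
      then show ?thesis using skip Cons.prems(1) \<open>ws = w # ws'\<close> by simp
    qed
  qed
qed

lemma exists_list_le_sum_list:
  fixes ys :: "nat list"
  assumes "d \<le> sum_list ys"
  shows "\<exists>us. list_all2 (\<le>) us ys \<and> sum_list us = d"
  using assms
proof (induction ys arbitrary: d)
  case (Cons y ys)
  show ?case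
  proof (cases "d \<le> y")
    case True
    have "list_all2 (\<le>) (replicate (length ys) 0) ys"
      by (simp add: list_all2_conv_all_nth)
    with True show ?thesis by (intro exI[of _ "d # replicate (length ys) 0"]) simp
  next
    case False
    then have "d - y \<le> sum_list ys" using Cons.prems by simp
    then obtain us where "list_all2 (\<le>) us ys" "sum_list us = d - y"
      using Cons.IH by blast
    with False show ?thesis by (intro exI[of _ "y # us"]) simp
  qed
qed simp

lemma dominated_word_subseq:
  assumes "list_emb (list_all2 (\<le>)) ws ws'" "valid_basis r (d, ws)"
    and "\<forall>y\<in>set ws'. length y = r \<and> d \<le> sum_list y"
  shows "\<exists>vs. list_all2 (list_all2 (\<le>)) vs ws' \<and> valid_basis r (d, vs) \<and> subseq ws vs"
  using assms
proof (induction ws' arbitrary: ws rule: list.induct)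
  case Nil
  then show ?case by (auto simp: valid_basis_def dest: list_emb_Nil2)
next
  case (Cons y ys)
  from Cons.prems(1) consider "list_emb (list_all2 (\<le>)) ws ys"
    | x xs where "ws = x # xs" "list_all2 (\<le>) x y" "list_emb (list_all2 (\<le>)) xs ys"
    by (cases rule: list_emb.cases) auto
  then show ?case
  proof cases
    case 1
    then obtain vs where vs: "list_all2 (list_all2 (\<le>)) vs ys" "valid_basis r (d, vs)" "subseq ws vs"
      using Cons by auto
    obtain u where u: "list_all2 (\<le>) u y" "sum_list u = d"
      using exists_list_le_sum_list[of d y] Cons.prems(3) by auto
    then have "length u = r" using Cons.prems(3) by (auto dest: list_all2_lengthD)
    with vs u show ?thesis
      by (intro exI[of _ "u # vs"]) (auto simp: valid_basis_def)
  next
    case 2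
    have "valid_basis r (d, xs)" using Cons.prems(2) 2(1) by (simp add: valid_basis_def)
    then obtain vs where vs: "list_all2 (list_all2 (\<le>)) vs ys" "valid_basis r (d, vs)" "subseq xs vs"
      using Cons.IH 2(3) Cons.prems(3) by auto
    with 2 Cons.prems(2) show ?thesis
      by (intro exI[of _ "x # vs"]) (auto simp: valid_basis_def)
  qed
qed

lemma list_le_eq_add:
  fixes xs ys :: "nat list"
  assumes "list_all2 (\<le>) xs ys"
  shows "length (map2 (-) ys xs) = length xs \<and> ys = map2 (+) (map2 (-) ys xs) xs \<and>
    sum_list ys = sum_list (map2 (-) ys xs) + sum_list xs"
  using assms by (induction rule: list_all2_induct) auto

lemma dominated_word_eq_add:
  assumes "list_all2 (list_all2 (\<le>)) vs ws" "valid_basis r (d, vs)" "valid_basis r (d + e, ws)"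
  shows "\<exists>zs. valid_basis r (e, zs) \<and> length zs = length vs \<and> ws = map2 (map2 (+)) zs vs"
  using assms
proof (induction rule: list_all2_induct)
  case (Cons v vs w ws)
  then obtain zs where "valid_basis r (e, zs)" "length zs = length vs" "ws = map2 (map2 (+)) zs vs"
    by (auto simp: valid_basis_def)
  moreover have "length (map2 (-) w v) = r" "sum_list (map2 (-) w v) = e" "w = map2 (+) (map2 (-) w v) v"
    using list_le_eq_add[OF Cons.hyps(1)] Cons.prems by (auto simp: valid_basis_def)
  ultimately show ?case
    by (intro exI[of _ "map2 (-) w v # zs"]) (auto simp: valid_basis_def)
qed (simp add: valid_basis_def)

lemma basis_dvd_if_emb:
  assumes "valid_basis r (d, ws)" "valid_basis r (d', ws')" "d \<le> d'"
    and "list_emb (list_all2 (\<le>)) ws ws'"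
  shows "basis_dvd r (d, ws) (d', ws')"
proof -
  obtain vs where vs: "list_all2 (list_all2 (\<le>)) vs ws'" "valid_basis r (d, vs)" "subseq ws vs"
    using dominated_word_subseq[OF assms(4,1)] assms(2,3) by (fastforce simp: valid_basis_def)
  have "basis_dvd r (d, ws) (d, vs)"
    using basis_dvd_subseq[of ws vs r d "[]"] vs by simp
  moreover obtain zs where zs: "valid_basis r (d' - d, zs)" "length zs = length vs"
    "ws' = map2 (map2 (+)) zs vs"
    using dominated_word_eq_add[OF vs(1,2), of "d' - d"] assms(2,3) by auto
  then have "basis_dvd_step r (d, vs) (d', ws')"
    unfolding basis_dvd_step_def using vs(2) assms(3)
    by (intro conjI disjI2 exI[of _ "(d' - d, zs)"]) simp_all
  ultimately show ?thesis unfolding basis_dvd_def by (rule rtranclp.rtrancl_into_rtrancl)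
qed

lemma almost_full_on_basis_dvd: "almost_full_on (basis_dvd r) {b. valid_basis r b}"
proof -
  have "almost_full_on (\<lambda>x y. fst x \<le> fst y \<and> list_emb (list_all2 (\<le>)) (snd x) (snd y))
      ((UNIV :: nat set) \<times> lists {xs \<in> lists (UNIV :: nat set). length xs = r})"
    by (intro almost_full_on_Times almost_full_on_nat_le almost_full_on_lists
        almost_full_on_list_all2)
  then show ?thesis
  proof (rule almost_full_on_map[where h = id])
    show "id ` {b. valid_basis r b} \<subseteq> UNIV \<times> lists {xs \<in> lists UNIV. length xs = r}"
      by (auto simp: valid_basis_def)
  next
    fix b b' :: basis
    assume "b \<in> {b. valid_basis r b}" "b' \<in> {b. valid_basis r b}"
      and "fst (id b) \<le> fst (id b') \<and> list_emb (list_all2 (\<le>)) (snd (id b)) (snd (id b'))"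
    then show "basis_dvd r b b'"
      using basis_dvd_if_emb[of r "fst b" "snd b" "fst b'" "snd b'"] by simp
  qed
qed

section \<open>Leading terms\<close>

lemma A_ideal_Aelem: "A_ideal r I \<Longrightarrow> f \<in> I \<Longrightarrow> Aelem r f"
  and A_ideal_zero: "A_ideal r I \<Longrightarrow> (\<lambda>_. 0) \<in> I"
  and A_ideal_add: "A_ideal r I \<Longrightarrow> f \<in> I \<Longrightarrow> g \<in> I \<Longrightarrow> (\<lambda>b. f b + g b) \<in> I"
  and A_ideal_smult: "A_ideal r I \<Longrightarrow> f \<in> I \<Longrightarrow> (\<lambda>b. c * f b) \<in> I"
  and A_ideal_comp: "A_ideal r I \<Longrightarrow> f \<in> I \<Longrightarrow> comp d n f \<in> I"
  and A_ideal_conv_st: "A_ideal r I \<Longrightarrow> f \<in> I \<Longrightarrow> Aelem r g \<Longrightarrow> conv st_op g f \<in> I"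
  and A_ideal_conv_sh: "A_ideal r I \<Longrightarrow> f \<in> I \<Longrightarrow> Aelem r g \<Longrightarrow> conv (sh_op S) g f \<in> I"
  unfolding A_ideal_def by blast+

lemma A_ideal_sum:
  assumes "A_ideal r I" "finite Y" "\<And>y. y \<in> Y \<Longrightarrow> \<phi> y \<in> I"
  shows "(\<lambda>b. \<Sum>y\<in>Y. \<phi> y b) \<in> I"
  using assms(2,3)
proof (induction rule: finite_induct)
  case empty
  then show ?case using A_ideal_zero[OF assms(1)] by simp
next
  case (insert y Y)
  then show ?case using A_ideal_add[OF assms(1), of "\<phi> y" "\<lambda>b. \<Sum>y\<in>Y. \<phi> y b"] by simp
qed

lemma A_ideal_gen_subset: "A_ideal r I \<Longrightarrow> F \<subseteq> I \<Longrightarrow> A_ideal_gen r F \<subseteq> I"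
  unfolding A_ideal_gen_def by blast

lemma A_ideal_gen_singleton_trans:
  "g \<in> A_ideal_gen r {f} \<Longrightarrow> h \<in> A_ideal_gen r {g} \<Longrightarrow> h \<in> A_ideal_gen r {f}"
  unfolding A_ideal_gen_def by blast

definition basis_vec :: "basis \<Rightarrow> basis \<Rightarrow> 'k::comm_ring_1" where
  "basis_vec c = (\<lambda>x. if x = c then 1 else 0)"

lemma Aelem_basis_vec: "valid_basis r c \<Longrightarrow> Aelem r (basis_vec c)"
  unfolding Aelem_def basis_vec_def
  by (auto intro: finite_subset[of _ "{c}"])

lemma conv_basis_vec_in_A_ideal_gen:
  assumes "valid_basis r c"
  shows "conv st_op (basis_vec c) f \<in> A_ideal_gen r {f}"
    and "conv (sh_op S) (basis_vec c) f \<in> A_ideal_gen r {f}"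
  unfolding A_ideal_gen_def
  using A_ideal_conv_st[OF _ _ Aelem_basis_vec[OF assms]] A_ideal_conv_sh[OF _ _ Aelem_basis_vec[OF assms]]
  by auto

lemma conv_basis_vec_eq:
  fixes f :: "basis \<Rightarrow> 'k::comm_ring_1"
  assumes op: "\<forall>x\<in>D. op c x = Some (h x)" and inj: "inj_on h D"
    and supp: "{x. f x \<noteq> 0} \<subseteq> D" and "x \<in> D"
  shows "conv op (basis_vec c) f (h x) = f x"
proof -
  have "basis_vec c p \<noteq> (0::'k) \<and> f q \<noteq> 0 \<and> op p q = Some (h x) \<longleftrightarrow> p = c \<and> q = x \<and> f x \<noteq> 0"
    for p q
  proof
    assume *: "basis_vec c p \<noteq> (0::'k) \<and> f q \<noteq> 0 \<and> op p q = Some (h x)"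
    then have "p = c" "q \<in> D" using supp by (auto simp: basis_vec_def split: if_splits)
    with * op have "h q = h x" by simp
    with \<open>q \<in> D\<close> \<open>x \<in> D\<close> have "q = x" using inj_onD[OF inj] by blast
    with * \<open>p = c\<close> show "p = c \<and> q = x \<and> f x \<noteq> 0" by simp
  next
    assume *: "p = c \<and> q = x \<and> f x \<noteq> 0"
    then have "(1::'k) \<noteq> 0" by (metis mult_1 mult_zero_left)
    with * op \<open>x \<in> D\<close> show "basis_vec c p \<noteq> (0::'k) \<and> f q \<noteq> 0 \<and> op p q = Some (h x)"
      by (simp add: basis_vec_def)
  qed
  then have "{(p, q). basis_vec c p \<noteq> (0::'k) \<and> f q \<noteq> 0 \<and> op p q = Some (h x)} =
      (if f x \<noteq> 0 then {(c, x)} else {})"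
    by auto
  then show ?thesis unfolding conv_def by (simp add: basis_vec_def)
qed

lemma conv_basis_vec_nonzero:
  fixes f :: "basis \<Rightarrow> 'k::comm_ring_1"
  assumes op: "\<forall>x\<in>D. op c x = Some (h x)" and supp: "{x. f x \<noteq> 0} \<subseteq> D"
    and "conv op (basis_vec c) f y \<noteq> 0"
  obtains x where "f x \<noteq> 0" "y = h x"
proof -
  have "{(p, q). basis_vec c p \<noteq> (0::'k) \<and> f q \<noteq> 0 \<and> op p q = Some y} \<noteq> {}"
    using assms(3) unfolding conv_def by (metis (no_types) sum.empty)
  then obtain p q where pq: "basis_vec c p \<noteq> (0::'k)" "f q \<noteq> 0" "op p q = Some y" by blast
  then have "p = c" "q \<in> D" using supp by (auto simp: basis_vec_def split: if_splits)
  with pq op have "y = h q" by simp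
  with pq(2) show thesis by (rule that)
qed

definition bideg :: "basis \<Rightarrow> nat \<times> nat" where
  "bideg b = (fst b, length (snd b))"

text \<open>If \<open>supp_below f b\<close>, then \<open>f\<close> has no terms above \<open>b\<close> in the lexicographic order, so
  \<open>f b\<close> is its leading coefficient when nonzero.\<close>
definition supp_below :: "(basis \<Rightarrow> 'k::comm_ring_1) \<Rightarrow> basis \<Rightarrow> bool" where
  "supp_below f b \<longleftrightarrow> (\<forall>x. f x \<noteq> 0 \<longrightarrow> bideg x = bideg b \<and> x \<le> b)"

lemma conv_basis_vec_supp_below:
  fixes f :: "basis \<Rightarrow> 'k::comm_ring_1"
  assumes op: "\<forall>x\<in>D. op c x = Some (h x)" and mono: "strict_mono_on D h"
    and bideg: "\<forall>x\<in>D. bideg (h x) = bideg (h b)"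
    and supp: "{x. f x \<noteq> 0} \<subseteq> D" and "b \<in> D" and below: "supp_below f b"
  shows "supp_below (conv op (basis_vec c) f) (h b) \<and> conv op (basis_vec c) f (h b) = f b"
proof
  show "conv op (basis_vec c) f (h b) = f b"
    using conv_basis_vec_eq[where f = f and op = op and c = c and h = h, OF op strict_mono_on_imp_inj_on[OF mono] supp \<open>b \<in> D\<close>] .
  show "supp_below (conv op (basis_vec c) f) (h b)"
    unfolding supp_below_def
  proof (intro allI impI)
    fix y assume "conv op (basis_vec c) f y \<noteq> 0"
    then obtain x where x: "f x \<noteq> 0" "y = h x"
      using conv_basis_vec_nonzero[where op = op and c = c and h = h, OF op supp] by blast
    with supp have "x \<in> D" by blast
    moreover have "x \<le> b" using below x(1) unfolding supp_below_def by blast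
    ultimately show "bideg y = bideg (h b) \<and> y \<le> h b"
      using x(2) bideg strict_mono_on_less_eq[OF mono _ \<open>b \<in> D\<close>] by simp
  qed
qed

lemma insert_at_less:
  fixes xs ys :: "'a::linorder list"
  assumes "length xs = length ys" "k \<le> length xs" "xs < ys"
  shows "insert_at k u xs < insert_at k u ys"
  using assms
proof (induction k arbitrary: xs ys)
  case 0
  then show ?case by (simp add: insert_at_def)
next
  case (Suc k)
  then obtain x xs' y ys' where "xs = x # xs'" "ys = y # ys'"
    by (metis Suc_le_length_iff)
  with Suc show ?case by (auto simp: insert_at_def)
qed

lemma map2_less:
  fixes xs ys :: "'a::linorder list"
  assumes "length xs = length cs" "length ys = length cs"
    and "\<forall>c\<in>set cs. \<forall>x\<in>set xs. \<forall>y\<in>set ys. x < y \<longrightarrow> F c x < (F c y :: 'b::linorder)"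
    and "xs < ys"
  shows "map2 F cs xs < map2 F cs ys"
  using assms
proof (induction cs arbitrary: xs ys)
  case (Cons c cs)
  then obtain x xs' y ys' where xy: "xs = x # xs'" "ys = y # ys'"
    by (metis length_Suc_conv)
  show ?case
  proof (cases "x < y")
    case True
    with Cons.prems(3) xy show ?thesis by simp
  next
    case False
    with Cons.prems(4) xy have "x = y" "xs' < ys'" by auto
    with Cons xy show ?thesis by simp
  qed
qed simp

lemma map2_map2_plus_less:
  fixes cs xs ys :: "nat list list"
  assumes "length xs = length cs" "length ys = length cs" "xs < ys"
    and "\<forall>m\<in>set cs \<union> set xs \<union> set ys. length m = r"
  shows "map2 (map2 (+)) cs xs < map2 (map2 (+)) cs ys"
  using assms by (intro map2_less) (auto intro!: map2_less)

lemma shuffle_lists_singleton: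
  assumes "k \<le> length ys"
  shows "shuffle_lists {k} [u] ys = insert_at k u ys"
proof (rule nth_equalityI)
  show "length (shuffle_lists {k} [u] ys) = length (insert_at k u ys)"
    using assms by (simp add: shuffle_lists_def)
next
  fix i assume "i < length (shuffle_lists {k} [u] ys)"
  then have "i < Suc (length ys)" by (simp add: shuffle_lists_def)
  moreover have empty: "{j. j = k \<and> j < k} = {}" by auto
  ultimately have lhs: "shuffle_lists {k} [u] ys ! i =
      (if i = k then u else ys ! card {j. j < i \<and> j \<noteq> k})"
    unfolding shuffle_lists_def by (simp del: upt_Suc add: empty)
  consider "i < k" | "i = k" | "k < i" by linarith
  then show "shuffle_lists {k} [u] ys ! i = insert_at k u ys ! i"
  proof cases
    case 1
    then have "{j. j < i \<and> j \<noteq> k} = {..<i}" by auto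
    with 1 lhs assms show ?thesis by (simp add: insert_at_def nth_append)
  next
    case 2
    with lhs assms show ?thesis by (simp add: insert_at_def nth_append)
  next
    case 3
    then have "{j. j < i \<and> j \<noteq> k} = {..<i} - {k}" by auto
    with 3 have "card {j. j < i \<and> j \<noteq> k} = i - 1" by simp
    moreover have "insert_at k u ys ! i = ys ! (i - 1)"
      using 3 assms \<open>i < Suc (length ys)\<close>
      by (simp add: insert_at_def nth_append)
    ultimately show ?thesis using lhs 3 by simp
  qed
qed

lemma sh_op_singleton:
  "fst x = d \<Longrightarrow> k \<le> length (snd x) \<Longrightarrow> sh_op {k} (d, [u]) x = Some (d, insert_at k u (snd x))"
  by (simp add: sh_op_def is_split_def shuffle_lists_singleton)

lemma less_basis_same_degree: "fst x = fst y \<Longrightarrow> x < y \<longleftrightarrow> snd x < snd y"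
  for x y :: basis
  by (cases x, cases y) simp

lemma supp_below_lift_step:
  fixes f :: "basis \<Rightarrow> 'k::comm_ring_1"
  assumes valid: "\<forall>x. f x \<noteq> 0 \<longrightarrow> valid_basis r x"
    and step: "basis_dvd_step r b b'" and below: "supp_below f b"
  shows "\<exists>f'\<in>A_ideal_gen r {f}. supp_below f' b' \<and> f' b' = f b"
proof -
  have supp: "bideg x = bideg b" if "f x \<noteq> 0" for x
    using below that unfolding supp_below_def by blast
  from step consider (shuffle) k u where "k \<le> length (snd b)" "length u = r" "sum_list u = fst b"
      "b' = (fst b, insert_at k u (snd b))"
    | (mult) c where "valid_basis r c" "length (snd c) = length (snd b)"
      "b' = (fst c + fst b, map2 (map2 (+)) (snd c) (snd b))"
    unfolding basis_dvd_step_def by blast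
  then show ?thesis
  proof cases
    case shuffle
    define D where "D = {x. bideg x = bideg b}"
    define h where "h x = (fst b, insert_at k u (snd x))" for x :: basis
    let ?f' = "conv (sh_op {k}) (basis_vec (fst b, [u])) f"
    have "supp_below ?f' (h b) \<and> ?f' (h b) = f b"
    proof (rule conv_basis_vec_supp_below[where D = D and h = h and b = b])
      show "\<forall>x\<in>D. sh_op {k} (fst b, [u]) x = Some (h x)"
        using shuffle(1) by (simp add: D_def h_def bideg_def sh_op_singleton)
      show "strict_mono_on D h"
        using shuffle(1) by (intro strict_mono_onI)
          (auto simp: D_def h_def bideg_def less_basis_same_degree intro: insert_at_less)
    qed (use supp below shuffle(1) in \<open>auto simp: D_def h_def bideg_def\<close>)
    moreover have "?f' \<in> A_ideal_gen r {f}"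
      using shuffle(2,3) by (intro conv_basis_vec_in_A_ideal_gen) (simp add: valid_basis_def)
    ultimately show ?thesis using shuffle(4) by (auto simp: h_def)
  next
    case mult
    define D where "D = {x. bideg x = bideg b \<and> valid_basis r x}"
    define h where "h x = (fst c + fst x, map2 (map2 (+)) (snd c) (snd x))" for x :: basis
    let ?f' = "conv st_op (basis_vec c) f"
    have "valid_basis r b" using step unfolding basis_dvd_step_def by blast
    have "supp_below ?f' (h b) \<and> ?f' (h b) = f b"
    proof (rule conv_basis_vec_supp_below[where D = D and h = h and b = b])
      show "\<forall>x\<in>D. st_op c x = Some (h x)"
        using mult(2) by (simp add: D_def h_def bideg_def st_op_def)
      show "strict_mono_on D h"
      proof (rule strict_mono_onI)
        fix x y assume "x \<in> D" "y \<in> D" "x < y"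
        then show "h x < h y"
          using mult(1,2) map2_map2_plus_less[of "snd x" "snd c" "snd y" r]
          by (auto simp: D_def h_def bideg_def valid_basis_def less_basis_same_degree)
      qed
    qed (use supp valid below mult(2) \<open>valid_basis r b\<close> in \<open>auto simp: D_def h_def bideg_def\<close>)
    moreover have "?f' \<in> A_ideal_gen r {f}"
      using mult(1) by (rule conv_basis_vec_in_A_ideal_gen)
    ultimately show ?thesis using mult(3) by (auto simp: h_def)
  qed
qed

lemma supp_below_lift:
  fixes f :: "basis \<Rightarrow> 'k::comm_ring_1"
  assumes I: "A_ideal r I" "f \<in> I" and dvd: "basis_dvd r b b'" and below: "supp_below f b"
  shows "\<exists>f'\<in>A_ideal_gen r {f}. supp_below f' b' \<and> f' b' = f b"
  using dvd[unfolded basis_dvd_def]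
proof (induction rule: rtranclp_induct)
  case base
  have "f \<in> A_ideal_gen r {f}" unfolding A_ideal_gen_def by blast
  with below show ?case by blast
next
  case (step b1 b2)
  then obtain f1 where f1: "f1 \<in> A_ideal_gen r {f}" "supp_below f1 b1" "f1 b1 = f b" by blast
  have "f1 \<in> I" using f1(1) A_ideal_gen_subset[OF I(1)] I(2) by blast
  then have "\<forall>x. f1 x \<noteq> 0 \<longrightarrow> valid_basis r x"
    using A_ideal_Aelem[OF I(1)] unfolding Aelem_def by blast
  then obtain f2 where "f2 \<in> A_ideal_gen r {f1}" "supp_below f2 b2" "f2 b2 = f1 b1"
    using supp_below_lift_step step.hyps(2) f1(2) by blast
  with f1 show ?case by (metis A_ideal_gen_singleton_trans)
qed

section \<open>Noetherian coefficients\<close>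

definition ring_span :: "'k::comm_ring_1 set \<Rightarrow> 'k set" where
  "ring_span X = {\<Sum>x\<in>F. c x * x | F c. finite F \<and> F \<subseteq> X}"

lemma ring_span_mono: "X \<subseteq> Y \<Longrightarrow> ring_span X \<subseteq> ring_span Y"
  unfolding ring_span_def by blast

lemma ring_ideal_sum:
  assumes "ring_ideal J" "finite F" "F \<subseteq> J"
  shows "(\<Sum>x\<in>F. c x * x) \<in> J"
  using assms(2,3)
proof (induction rule: finite_induct)
  case empty
  then show ?case using assms(1) unfolding ring_ideal_def by simp
next
  case (insert y F)
  then show ?case using assms(1) unfolding ring_ideal_def by simp
qed

lemma ring_ideal_ring_span: "ring_ideal (ring_span X)"
  unfolding ring_ideal_def
proof (intro conjI ballI allI)
  show "0 \<in> ring_span X" unfolding ring_span_def by (intro CollectI exI[of _ "{}"]) simp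
next
  fix a b assume "a \<in> ring_span X" "b \<in> ring_span X"
  then obtain F c G e where FG: "finite F" "F \<subseteq> X" "a = (\<Sum>x\<in>F. c x * x)"
    "finite G" "G \<subseteq> X" "b = (\<Sum>x\<in>G. e x * x)" unfolding ring_span_def by blast
  define c' where "c' x = (if x \<in> F then c x else 0) + (if x \<in> G then e x else 0)" for x
  have "(\<Sum>x\<in>F \<union> G. c' x * x) =
      (\<Sum>x\<in>F \<union> G. (if x \<in> F then c x * x else 0) + (if x \<in> G then e x * x else 0))"
    by (rule sum.cong) (simp_all add: c'_def distrib_right)
  also have "\<dots> =
      (\<Sum>x\<in>F \<union> G. (if x \<in> F then c x * x else 0)) + (\<Sum>x\<in>F \<union> G. (if x \<in> G then e x * x else 0))"
    by (rule sum.distrib)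
  also have "\<dots> = a + b"
    using FG by (simp add: sum.inter_restrict[symmetric] Int_absorb2)
  finally have "a + b = (\<Sum>x\<in>F \<union> G. c' x * x)" ..
  moreover have "finite (F \<union> G)" "F \<union> G \<subseteq> X" using FG by simp_all
  ultimately show "a + b \<in> ring_span X"
    unfolding ring_span_def by (intro CollectI exI[of _ "F \<union> G"] exI[of _ c']) simp
next
  fix c a assume "a \<in> ring_span X"
  then obtain F e where F: "finite F" "F \<subseteq> X" "a = (\<Sum>x\<in>F. e x * x)"
    unfolding ring_span_def by blast
  then have "c * a = (\<Sum>x\<in>F. (c * e x) * x)" by (simp add: sum_distrib_left mult.assoc)
  with F show "c * a \<in> ring_span X"
    unfolding ring_span_def by (intro CollectI exI[of _ F] exI[of _ "\<lambda>x. c * e x"]) simp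
qed

lemma ring_span_least:
  assumes "ring_ideal J" "X \<subseteq> J"
  shows "ring_span X \<subseteq> J"
proof
  fix y assume "y \<in> ring_span X"
  then obtain F c where "finite F" "F \<subseteq> X" "y = (\<Sum>x\<in>F. c x * x)"
    unfolding ring_span_def by blast
  with assms show "y \<in> J" using ring_ideal_sum[of J F c] by blast
qed

lemma ring_span_superset: "X \<subseteq> ring_span X"
proof
  fix x assume "x \<in> X"
  then show "x \<in> ring_span X"
    unfolding ring_span_def by (intro CollectI exI[of _ "{x}"] exI[of _ "\<lambda>_. 1"]) simp
qed

lemma ring_span_finite_subset:
  assumes "x \<in> ring_span X"
  obtains F where "finite F" "F \<subseteq> X" "x \<in> ring_span F"
proof -
  obtain F c where "finite F" "F \<subseteq> X" "x = (\<Sum>y\<in>F. c y * y)"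
    using assms unfolding ring_span_def by blast
  then show thesis
    using that[of F] unfolding ring_span_def by blast
qed

lemma noetherian_in_ring_span_prefix:
  fixes a :: "nat \<Rightarrow> 'k::comm_ring_1"
  assumes "noetherian TYPE('k)"
  obtains n where "a n \<in> ring_span (a ` {..<n})"
proof -
  have "ring_ideal_fg (ring_span (range a))"
    using assms ring_ideal_ring_span unfolding noetherian_def by blast
  then obtain F where F: "finite F" "F \<subseteq> ring_span (range a)"
      "ring_span (range a) = {\<Sum>x\<in>F. c x * x | c. True}"
    unfolding ring_ideal_fg_def by blast
  have "\<forall>y\<in>F. \<exists>Y. finite Y \<and> Y \<subseteq> range a \<and> y \<in> ring_span Y"
    using F(2) by (meson ring_span_finite_subset subsetD)
  then obtain Y where Y: "\<forall>y\<in>F. finite (Y y) \<and> Y y \<subseteq> range a \<and> y \<in> ring_span (Y y)"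
    by (rule bchoice[elim_format]) blast
  have "finite (\<Union>y\<in>F. Y y)" "(\<Union>y\<in>F. Y y) \<subseteq> a ` UNIV" using F(1) Y by auto
  from finite_subset_image[OF this] obtain C where "finite C" and C: "(\<Union>y\<in>F. Y y) = a ` C"
    by blast
  obtain n where "C \<subseteq> {..<n}"
    using finite_nat_bounded[OF \<open>finite C\<close>] by blast
  then have "(\<Union>y\<in>F. Y y) \<subseteq> a ` {..<n}" unfolding C by (rule image_mono)
  have "F \<subseteq> ring_span (a ` {..<n})"
  proof
    fix y assume "y \<in> F"
    with \<open>(\<Union>y\<in>F. Y y) \<subseteq> a ` {..<n}\<close> have "ring_span (Y y) \<subseteq> ring_span (a ` {..<n})"
      by (intro ring_span_mono) blast
    with Y \<open>y \<in> F\<close> show "y \<in> ring_span (a ` {..<n})" by blast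
  qed
  then have "ring_span F \<subseteq> ring_span (a ` {..<n})"
    by (rule ring_span_least[OF ring_ideal_ring_span])
  moreover have "{\<Sum>x\<in>F. c x * x | c. True} \<subseteq> ring_span F"
    using F(1) unfolding ring_span_def by blast
  moreover have "a n \<in> ring_span (range a)"
    using ring_span_superset by blast
  ultimately have "a n \<in> ring_span (a ` {..<n})"
    unfolding F(3) by blast
  then show thesis by (rule that)
qed

section \<open>Finite generation\<close>

definition leading_pairs :: "nat \<Rightarrow> (basis \<Rightarrow> 'k::comm_ring_1) set \<Rightarrow> (basis \<times> (basis \<Rightarrow> 'k)) set" where
  "leading_pairs r I = {(b, f). valid_basis r b \<and> f \<in> I \<and> supp_below f b}"

definition lead_coeffs :: "nat \<Rightarrow> (basis \<times> (basis \<Rightarrow> 'k::comm_ring_1)) set \<Rightarrow> basis \<Rightarrow> 'k set" where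
  "lead_coeffs r G b = {f c | c f. (c, f) \<in> G \<and> basis_dvd r c b}"

definition lead_coeff_basis ::
    "nat \<Rightarrow> (basis \<Rightarrow> 'k::comm_ring_1) set \<Rightarrow> (basis \<times> (basis \<Rightarrow> 'k)) set \<Rightarrow> bool" where
  "lead_coeff_basis r I G \<longleftrightarrow> G \<subseteq> leading_pairs r I \<and>
     (\<forall>(b, f)\<in>leading_pairs r I. f b \<in> ring_span (lead_coeffs r G b))"

text \<open>Otherwise dependent choice gives leading pairs each of which is not covered by its
  predecessors; along a subsequence increasing for divisibility their leading coefficients form a
  strictly ascending chain of ideals.\<close>
lemma finite_lead_coeff_basis:
  fixes I :: "(basis \<Rightarrow> 'k::comm_ring_1) set"
  assumes noeth: "noetherian TYPE('k)"
  obtains G where "finite G" "lead_coeff_basis r I G"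
proof (rule ccontr)
  assume "\<not> thesis"
  then have no_basis: "\<not> lead_coeff_basis r I (set ps)" for ps using that by blast
  define uncovered where "uncovered ps p \<longleftrightarrow> p \<in> leading_pairs r I \<and>
      snd p (fst p) \<notin> ring_span (lead_coeffs r (set ps) (fst p))" for ps p
  have step: "\<exists>p. set (ps @ [p]) \<subseteq> leading_pairs r I \<and> uncovered ps p"
    if ps: "set ps \<subseteq> leading_pairs r I" for ps
  proof -
    obtain b f where "(b, f) \<in> leading_pairs r I" "f b \<notin> ring_span (lead_coeffs r (set ps) b)"
      using no_basis[of ps] ps unfolding lead_coeff_basis_def by blast
    with ps show ?thesis unfolding uncovered_def by (intro exI[of _ "(b, f)"]) simp
  qed
  then obtain s :: "nat \<Rightarrow> basis \<times> (basis \<Rightarrow> 'k)"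
    where s: "\<And>n. uncovered (map s [0..<n]) (s n)"
    using dependent_choice_prefixes[of "\<lambda>ps. set ps \<subseteq> leading_pairs r I" uncovered, OF _ step]
    by (metis empty_set empty_subsetI)
  have "\<forall>n. fst (s n) \<in> {b. valid_basis r b}"
    using s unfolding uncovered_def leading_pairs_def by (auto simp: case_prod_unfold)
  then obtain \<phi> :: "nat \<Rightarrow> nat" where \<phi>: "strict_mono \<phi>"
    and dvd: "\<And>i j. i < j \<Longrightarrow> basis_dvd r (fst (s (\<phi> i))) (fst (s (\<phi> j)))"
    using almost_full_on_subseq[OF almost_full_on_basis_dvd, of "\<lambda>n. fst (s n)"] by blast
  define a where "a t = snd (s (\<phi> t)) (fst (s (\<phi> t)))" for t
  obtain n where "a n \<in> ring_span (a ` {..<n})"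
    using noetherian_in_ring_span_prefix[OF noeth] by blast
  moreover have "a ` {..<n} \<subseteq> lead_coeffs r (set (map s [0..<\<phi> n])) (fst (s (\<phi> n)))"
  proof
    fix y assume "y \<in> a ` {..<n}"
    then obtain i where "i < n" "y = a i" by blast
    moreover have "s (\<phi> i) \<in> set (map s [0..<\<phi> n])"
      using strict_monoD[OF \<phi> \<open>i < n\<close>] by simp
    ultimately show "y \<in> lead_coeffs r (set (map s [0..<\<phi> n])) (fst (s (\<phi> n)))"
      unfolding lead_coeffs_def a_def using dvd[OF \<open>i < n\<close>]
      by (intro CollectI exI[of _ "fst (s (\<phi> i))"] exI[of _ "snd (s (\<phi> i))"]) simp
  qed
  ultimately show False
    using s[of "\<phi> n"] ring_span_mono unfolding uncovered_def a_def by blast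
qed

lemma supp_below_sum:
  assumes "\<And>y. y \<in> Y \<Longrightarrow> supp_below (g y) b"
  shows "supp_below (\<lambda>x. \<Sum>y\<in>Y. c y * g y x) b"
  unfolding supp_below_def
proof (intro allI impI)
  fix x assume "(\<Sum>y\<in>Y. c y * g y x) \<noteq> 0"
  then obtain y where "y \<in> Y" "g y x \<noteq> 0" by (metis (no_types, lifting) mult_zero_right sum.neutral)
  then show "bideg x = bideg b \<and> x \<le> b" using assms unfolding supp_below_def by blast
qed

lemma lead_term_reduction:
  fixes I J :: "(basis \<Rightarrow> 'k::comm_ring_1) set"
  assumes I: "A_ideal r I" and J: "A_ideal r J"
    and G: "G \<subseteq> leading_pairs r I" "snd ` G \<subseteq> J"
    and cover: "f b \<in> ring_span (lead_coeffs r G b)"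
  obtains h where "h \<in> I" "h \<in> J" "supp_below h b" "h b = f b"
proof -
  obtain Y c where Y: "finite Y" "Y \<subseteq> lead_coeffs r G b" "f b = (\<Sum>y\<in>Y. c y * y)"
    using cover unfolding ring_span_def by blast
  have "\<forall>y\<in>Y. \<exists>g. g \<in> I \<and> g \<in> J \<and> supp_below g b \<and> g b = y"
  proof
    fix y assume "y \<in> Y"
    with Y(2) obtain e g where eg: "(e, g) \<in> G" "basis_dvd r e b" "y = g e"
      unfolding lead_coeffs_def by blast
    with G have "g \<in> I" "g \<in> J" "supp_below g e"
      unfolding leading_pairs_def by force+
    then obtain g' where g': "g' \<in> A_ideal_gen r {g}" "supp_below g' b" "g' b = g e"
      using supp_below_lift[OF I _ eg(2)] by blast
    have "g' \<in> I" "g' \<in> J"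
      using g'(1) A_ideal_gen_subset[OF I] A_ideal_gen_subset[OF J] \<open>g \<in> I\<close> \<open>g \<in> J\<close> by blast+
    with g' eg(3) show "\<exists>g. g \<in> I \<and> g \<in> J \<and> supp_below g b \<and> g b = y" by blast
  qed
  then obtain g where g: "\<forall>y\<in>Y. g y \<in> I \<and> g y \<in> J \<and> supp_below (g y) b \<and> g y b = y"
    by (rule bchoice[elim_format]) blast
  define h where "h x = (\<Sum>y\<in>Y. c y * g y x)" for x
  show thesis
  proof
    show "h \<in> I"
      unfolding h_def using g by (intro A_ideal_sum[OF I Y(1)] A_ideal_smult[OF I]) blast
    show "h \<in> J"
      unfolding h_def using g by (intro A_ideal_sum[OF J Y(1)] A_ideal_smult[OF J]) blast
    show "supp_below h b" unfolding h_def using g by (intro supp_below_sum) blast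
    show "h b = f b" unfolding h_def Y(3) using g by simp
  qed
qed

lemma A_ideal_diff: "A_ideal r I \<Longrightarrow> f \<in> I \<Longrightarrow> g \<in> I \<Longrightarrow> (\<lambda>b. f b - g b) \<in> I"
  using A_ideal_add[of r I f "\<lambda>b. (-1) * g b"] A_ideal_smult[of r I g "-1"] by simp

lemma finite_valid_basis_bideg: "finite {b. valid_basis r b \<and> bideg b = (d, n)}"
proof -
  define M where "M = {u. set u \<subseteq> {..d} \<and> length u = r}"
  have "finite M" unfolding M_def by (rule finite_lists_length_eq) simp
  then have "finite ({d} \<times> {ws. set ws \<subseteq> M \<and> length ws = n})"
    by (simp add: finite_lists_length_eq)
  moreover have "{b. valid_basis r b \<and> bideg b = (d, n)} \<subseteq> {d} \<times> {ws. set ws \<subseteq> M \<and> length ws = n}"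
  proof
    fix b assume b: "b \<in> {b. valid_basis r b \<and> bideg b = (d, n)}"
    have "set u \<subseteq> {..d}" if "u \<in> set (snd b)" for u
      using b that member_le_sum_list[of _ u] by (fastforce simp: valid_basis_def bideg_def)
    with b show "b \<in> {d} \<times> {ws. set ws \<subseteq> M \<and> length ws = n}"
      by (cases b) (auto simp: valid_basis_def bideg_def M_def)
  qed
  ultimately show ?thesis by (rule finite_subset[rotated])
qed

lemma cancel_lead_term:
  fixes I J :: "(basis \<Rightarrow> 'k::comm_ring_1) set"
  assumes I: "A_ideal r I" and J: "A_ideal r J"
    and G: "lead_coeff_basis r I G" "snd ` G \<subseteq> J"
    and f: "f \<in> I" "\<forall>x. f x \<noteq> 0 \<longrightarrow> bideg x = \<delta>" "f \<noteq> (\<lambda>_. 0)"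
  obtains m h where "f m \<noteq> 0" "valid_basis r m" "bideg m = \<delta>" "\<And>x. f x \<noteq> 0 \<Longrightarrow> x \<le> m"
    "h \<in> I" "h \<in> J" "\<And>x. f x - h x \<noteq> 0 \<Longrightarrow> bideg x = \<delta> \<and> x < m"
proof -
  define S where "S = {x. f x \<noteq> 0}"
  have "finite S" "S \<noteq> {}"
    using A_ideal_Aelem[OF I f(1)] f(3) unfolding S_def Aelem_def by auto
  define m where "m = Max S"
  have "f m \<noteq> 0"
    using Max_in[OF \<open>finite S\<close> \<open>S \<noteq> {}\<close>] unfolding m_def S_def by simp
  then have "valid_basis r m" "bideg m = \<delta>"
    using A_ideal_Aelem[OF I f(1)] f(2) unfolding Aelem_def by blast+
  have le_m: "x \<le> m" if "f x \<noteq> 0" for x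
    using Max_ge[OF \<open>finite S\<close>] that unfolding m_def S_def by blast
  have "supp_below f m"
    using le_m f(2) \<open>bideg m = \<delta>\<close> unfolding supp_below_def by blast
  then have "(m, f) \<in> leading_pairs r I"
    using \<open>valid_basis r m\<close> f(1) unfolding leading_pairs_def by blast
  with G(1) have "G \<subseteq> leading_pairs r I" "f m \<in> ring_span (lead_coeffs r G m)"
    unfolding lead_coeff_basis_def by auto
  then obtain h where h: "h \<in> I" "h \<in> J" "supp_below h m" "h m = f m"
    by (rule lead_term_reduction[OF I J _ G(2)])
  have below_m: "bideg x = \<delta> \<and> x < m" if "f x - h x \<noteq> 0" for x
  proof -
    have "f x \<noteq> 0 \<or> h x \<noteq> 0" "x \<noteq> m" using that h(4) by auto
    then have "bideg x = bideg m \<and> x \<le> m"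
      using \<open>supp_below f m\<close> h(3) unfolding supp_below_def by blast
    with \<open>x \<noteq> m\<close> \<open>bideg m = \<delta>\<close> show ?thesis by auto
  qed
  show thesis
    by (rule that[OF \<open>f m \<noteq> 0\<close> \<open>valid_basis r m\<close> \<open>bideg m = \<delta>\<close> le_m h(1,2) below_m])
qed

lemma bihomogeneous_in_A_ideal:
  fixes I J :: "(basis \<Rightarrow> 'k::comm_ring_1) set"
  assumes I: "A_ideal r I" and J: "A_ideal r J"
    and G: "lead_coeff_basis r I G" "snd ` G \<subseteq> J"
  shows "f \<in> I \<Longrightarrow> \<forall>x. f x \<noteq> 0 \<longrightarrow> bideg x = \<delta> \<Longrightarrow> f \<in> J"
proof (induction f rule: measure_induct_rule[where
      f = "\<lambda>f. card {x. valid_basis r x \<and> bideg x = \<delta> \<and> (\<exists>y. f y \<noteq> 0 \<and> x \<le> y)}"])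
  case (less f)
  define below_supp where "below_supp f = {x. valid_basis r x \<and> bideg x = \<delta> \<and> (\<exists>y. f y \<noteq> 0 \<and> x \<le> y)}"
    for f :: "basis \<Rightarrow> 'k"
  show ?case
  proof (cases "f = (\<lambda>_. 0)")
    case True
    then show ?thesis using A_ideal_zero[OF J] by simp
  next
    case False
    then obtain m h where m: "f m \<noteq> 0" "valid_basis r m" "bideg m = \<delta>" "\<And>x. f x \<noteq> 0 \<Longrightarrow> x \<le> m"
      and h: "h \<in> I" "h \<in> J" and f'_below: "\<And>x. f x - h x \<noteq> 0 \<Longrightarrow> bideg x = \<delta> \<and> x < m"
      using cancel_lead_term[OF I J G less.prems] by blast
    define f' where "f' x = f x - h x" for x
    have "below_supp f' \<subseteq> below_supp f"
      unfolding below_supp_def f'_def using f'_below m(1)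
      by (blast intro: order.trans less_imp_le)
    moreover have "m \<in> below_supp f"
      unfolding below_supp_def using m(1-3) by blast
    moreover have "m \<notin> below_supp f'"
    proof
      assume "m \<in> below_supp f'"
      then obtain y where "f y - h y \<noteq> 0" "m \<le> y" unfolding below_supp_def f'_def by blast
      with f'_below[of y] show False by (simp add: leD)
    qed
    moreover have "finite (below_supp f)"
      using finite_valid_basis_bideg[of r "fst \<delta>" "snd \<delta>"]
      unfolding below_supp_def by (rule finite_subset[rotated]) auto
    ultimately have "card (below_supp f') < card (below_supp f)"
      by (intro psubset_card_mono) auto
    moreover have "f' \<in> I" unfolding f'_def using A_ideal_diff[OF I less.prems(1) h(1)] .
    moreover have "\<forall>x. f' x \<noteq> 0 \<longrightarrow> bideg x = \<delta>" using f'_below unfolding f'_def by blast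
    ultimately have "f' \<in> J"
      using less.IH[of f'] unfolding below_supp_def by blast
    then have "(\<lambda>x. f' x + h x) \<in> J" using A_ideal_add[OF J _ h(2)] by blast
    then show ?thesis unfolding f'_def by simp
  qed
qed

lemma A_ideal_subsetI_bihomogeneous:
  fixes I J :: "(basis \<Rightarrow> 'k::comm_ring_1) set"
  assumes I: "A_ideal r I" and J: "A_ideal r J"
    and bihom: "\<And>f \<delta>. f \<in> I \<Longrightarrow> \<forall>x. f x \<noteq> 0 \<longrightarrow> bideg x = \<delta> \<Longrightarrow> f \<in> J"
  shows "I \<subseteq> J"
proof
  fix f assume "f \<in> I"
  define \<Delta> where "\<Delta> = bideg ` {x. f x \<noteq> 0}"
  have "finite \<Delta>" using A_ideal_Aelem[OF I \<open>f \<in> I\<close>] unfolding \<Delta>_def Aelem_def by simp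
  have comp_bideg: "comp (fst \<delta>) (snd \<delta>) f x = (if bideg x = \<delta> then f x else 0)" for \<delta> x
    by (cases \<delta>) (simp add: comp_def bideg_def)
  have "comp (fst \<delta>) (snd \<delta>) f \<in> J" for \<delta>
  proof (rule bihom)
    show "comp (fst \<delta>) (snd \<delta>) f \<in> I" using A_ideal_comp[OF I \<open>f \<in> I\<close>] .
    show "\<forall>x. comp (fst \<delta>) (snd \<delta>) f x \<noteq> 0 \<longrightarrow> bideg x = \<delta>" by (simp add: comp_bideg)
  qed
  then have "(\<lambda>x. \<Sum>\<delta>\<in>\<Delta>. comp (fst \<delta>) (snd \<delta>) f x) \<in> J"
    by (rule A_ideal_sum[OF J \<open>finite \<Delta>\<close>])
  moreover have "(\<Sum>\<delta>\<in>\<Delta>. comp (fst \<delta>) (snd \<delta>) f x) = f x" for x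
    unfolding comp_bideg using \<open>finite \<Delta>\<close> by (auto simp: sum.delta' \<Delta>_def)
  ultimately show "f \<in> J" by simp
qed

lemma A_ideal_subset_if_lead_coeff_basis:
  fixes I J :: "(basis \<Rightarrow> 'k::comm_ring_1) set"
  assumes I: "A_ideal r I" and J: "A_ideal r J"
    and G: "lead_coeff_basis r I G" "snd ` G \<subseteq> J"
  shows "I \<subseteq> J"
proof (rule A_ideal_subsetI_bihomogeneous[OF I J])
  fix f \<delta> assume "f \<in> I" "\<forall>x. f x \<noteq> 0 \<longrightarrow> bideg x = \<delta>"
  then show "f \<in> J"
    by (rule bihomogeneous_in_A_ideal[OF I J G])
qed

theorem corollary2p9:
  fixes r :: nat and I :: "(basis \<Rightarrow> 'k::comm_ring_1) set"
  assumes "noetherian TYPE('k)"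
    and "r > 0"
    and "A_ideal r I"
  shows "A_ideal_fg r I"
proof -
  obtain G where "finite G" and G: "lead_coeff_basis r I G"
    using finite_lead_coeff_basis[OF assms(1)] by blast
  then have "snd ` G \<subseteq> I" unfolding lead_coeff_basis_def leading_pairs_def by auto
  have "I = A_ideal_gen r (snd ` G)"
  proof
    show "I \<subseteq> A_ideal_gen r (snd ` G)"
      unfolding A_ideal_gen_def using A_ideal_subset_if_lead_coeff_basis[OF assms(3) _ G] by blast
    show "A_ideal_gen r (snd ` G) \<subseteq> I"
      using A_ideal_gen_subset[OF assms(3) \<open>snd ` G \<subseteq> I\<close>] .
  qed
  moreover have "snd ` G \<subseteq> {f. Aelem r f}"
    using \<open>snd ` G \<subseteq> I\<close> A_ideal_Aelem[OF assms(3)] by blast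
  ultimately show ?thesis
    unfolding A_ideal_fg_def using \<open>finite G\<close> by blast
qed

end
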